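(* For every $1\le k\le e-1$, the interval $[1,\lambda^k]$ equals $D_k$, and $\lambda^k$ is balanced, i.e. $[1,\lambda^k]=[1,\lambda^k]_r$.
   Context: Let $e\ge 2$, $n\ge 2$, $\zeta_e=e^{2\pi i/e}$. $G(e,e,n)$ is the group of $n\times n$ monomial matrices with nonzero entries $e$-th roots of unity whose product is $1$; $w[i,c]$ is the $(i,c)$ entry. For $i\in\mathbb{Z}/e\mathbb{Z}$, $t_i$ is the matrix with $(1,2)$ entry $\zeta_e^{-i}$, $(2,1)$ entry $\zeta_e^{i}$, $(j,j)$ entry $1$ for $3\le j\le n$, other entries $0$; for $3\le j\le n$, $s_j$ is the permutation matrix of the transposition $(j-1\ j)$. $X=\{t_0,\dots,t_{e-1},s_3,\dots,s_n\}$ and $\ell$ is the word length with respect to $X$. For $u,w\in G(e,e,n)$ write $u\preceq w$ if $\ell(u)+\ell(u^{-1}w)=\ell(w)$, and $u\preceq_r w$ if $\ell(wu^{-1})+\ell(u)=\ell(w)$. For $g\in G(e,e,n)$, $[1,g]=\{w: w\preceq g\}$ and $[1,g]_r=\{w: w\preceq_r g\}$; $g$ is balanced if $[1,g]=[1,g]_r$. Let $\lambda$ be the diagonal matrix $\mathrm{diag}(\zeta_e^{-(n-1)},\zeta_e,\dots,\zeta_e)\in G(e,e,n)$. For $w\in G(e,e,n)$, a nonzero entry $w[i,c]$ is called a bullet if there is no nonzero entry $w[i',c']$ with $i'<i$ and $c'<c$. For $1\le k\le e-1$, $D_k$ is the set of $w\in G(e,e,n)$ such that every nonzero entry of $w$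 that is not a bullet is equal to $1$ or to $\zeta_e^{k}$. *)

theory Defs
  imports Complex_Main
begin

text \<open>Matrices of size n x n are represented as functions nat => nat => complex,
  with rows/columns indexed by 1..n; all entries outside {1..n}^2 are 0.\<close>

type_synonym cmat = "nat \<Rightarrow> nat \<Rightarrow> complex"

definition zeta :: "nat \<Rightarrow> complex" where
  "zeta e = cis (2 * pi / real e)"

definition idm :: "nat \<Rightarrow> cmat" where
  "idm n = (\<lambda>i j. if i = j \<and> i \<in> {1..n} then 1 else 0)"

definition mmult :: "nat \<Rightarrow> cmat \<Rightarrow> cmat \<Rightarrow> cmat" where
  "mmult n A B = (\<lambda>i j. \<Sum>k\<in>{1..n}. A i k * B k j)"

definition mpow :: "nat \<Rightarrow> cmat \<Rightarrow> nat \<Rightarrow> cmat" where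
  "mpow n A k = ((mmult n A) ^^ k) (idm n)"

definition Geen :: "nat \<Rightarrow> nat \<Rightarrow> cmat set" where
  "Geen e n = {A.
     (\<forall>i j. (i \<notin> {1..n} \<or> j \<notin> {1..n}) \<longrightarrow> A i j = 0) \<and>
     (\<forall>i\<in>{1..n}. \<exists>!j. j \<in> {1..n} \<and> A i j \<noteq> 0) \<and>
     (\<forall>j\<in>{1..n}. \<exists>!i. i \<in> {1..n} \<and> A i j \<noteq> 0) \<and>
     (\<forall>i j. A i j \<noteq> 0 \<longrightarrow> A i j ^ e = 1) \<and>
     (\<Prod>i\<in>{1..n}. \<Prod>j\<in>{1..n}. if A i j \<noteq> 0 then A i j else 1) = 1}"

definition ginv :: "nat \<Rightarrow> nat \<Rightarrow> cmat \<Rightarrow> cmat" where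
  "ginv e n w = (THE u. u \<in> Geen e n \<and> mmult n w u = idm n)"

definition tgen :: "nat \<Rightarrow> nat \<Rightarrow> int \<Rightarrow> cmat" where
  "tgen e n i = (\<lambda>r c.
     if r = 1 \<and> c = 2 then zeta e powi (- i)
     else if r = 2 \<and> c = 1 then zeta e powi i
     else if 3 \<le> r \<and> r \<le> n \<and> r = c then 1 else 0)"

definition sgen :: "nat \<Rightarrow> nat \<Rightarrow> cmat" where
  "sgen n j = (\<lambda>r c.
     if r \<in> {1..n} \<and> c \<in> {1..n} \<and>
        c = (if r = j - 1 then j else if r = j then j - 1 else r) then 1 else 0)"

definition gens :: "nat \<Rightarrow> nat \<Rightarrow> cmat set" where
  "gens e n = {tgen e n (int i) | i. i < e} \<union> {sgen n j | j. 3 \<le> j \<and> j \<le> n}"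

definition wprod :: "nat \<Rightarrow> cmat list \<Rightarrow> cmat" where
  "wprod n ws = foldr (mmult n) ws (idm n)"

definition wlen :: "nat \<Rightarrow> nat \<Rightarrow> cmat \<Rightarrow> nat" where
  "wlen e n w = (LEAST k. \<exists>ws. set ws \<subseteq> gens e n \<and> length ws = k \<and> wprod n ws = w)"

definition lpref :: "nat \<Rightarrow> nat \<Rightarrow> cmat \<Rightarrow> cmat \<Rightarrow> bool" where
  "lpref e n u w \<longleftrightarrow> wlen e n u + wlen e n (mmult n (ginv e n u) w) = wlen e n w"

definition rpref :: "nat \<Rightarrow> nat \<Rightarrow> cmat \<Rightarrow> cmat \<Rightarrow> bool" where
  "rpref e n u w \<longleftrightarrow> wlen e n (mmult n w (ginv e n u)) + wlen e n u = wlen e n w"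

definition interval :: "nat \<Rightarrow> nat \<Rightarrow> cmat \<Rightarrow> cmat set" where
  "interval e n g = {w \<in> Geen e n. lpref e n w g}"

definition interval_r :: "nat \<Rightarrow> nat \<Rightarrow> cmat \<Rightarrow> cmat set" where
  "interval_r e n g = {w \<in> Geen e n. rpref e n w g}"

definition balanced :: "nat \<Rightarrow> nat \<Rightarrow> cmat \<Rightarrow> bool" where
  "balanced e n g \<longleftrightarrow> interval e n g = interval_r e n g"

definition lam :: "nat \<Rightarrow> nat \<Rightarrow> cmat" where
  "lam e n = (\<lambda>r c. if r = c \<and> r = 1 then inverse (zeta e ^ (n - 1))
                    else if r = c \<and> 2 \<le> r \<and> r \<le> n then zeta e else 0)"

definition is_bullet :: "cmat \<Rightarrow> nat \<Rightarrow> nat \<Rightarrow> bool" where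
  "is_bullet w i c \<longleftrightarrow> w i c \<noteq> 0 \<and> \<not> (\<exists>i' c'. i' < i \<and> c' < c \<and> w i' c' \<noteq> 0)"

definition Dk :: "nat \<Rightarrow> nat \<Rightarrow> nat \<Rightarrow> cmat set" where
  "Dk e n k = {w \<in> Geen e n. \<forall>i c. w i c \<noteq> 0 \<and> \<not> is_bullet w i c \<longrightarrow>
                  w i c = 1 \<or> w i c = zeta e ^ k}"

end

theory Submission
  imports Defs "HOL-Combinatorics.Transposition"
begin

text \<open>An element of G(e,e,n) is a monomial matrix with permutation s and weights a. Its length
  is the number of inversions of s plus twice the number of ascents p < q, s p < s q, whose
  weight a q is nontrivial: multiplying by a generator changes this statistic by at most one,
  and every nontrivial element has a generator lowering it by exactly one. For u = (s, a) this
  gives length n(n-1) for \<lambda>^k, and the same length for u^-1 \<lambda>^k and \<lambda>^k u^-1, namely the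
  inversions of s plus twice the ascents with weight different from \<zeta>^k. As every ascent has a
  weight different from 1 or from \<zeta>^k, the length is additive exactly when all ascent weights
  lie in {1, \<zeta>^k}; and the entries of u that are not bullets are exactly those closing an
  ascent.\<close>

lemma zeta_power_eq_cis: "e > 0 \<Longrightarrow> zeta e ^ k = cis (2 * pi * real k / real e)"
  unfolding zeta_def DeMoivre by (simp add: mult.commute)

lemma zeta_power_self: "e > 0 \<Longrightarrow> zeta e ^ e = 1"
  using zeta_power_eq_cis[of e e] by simp

lemma zeta_nonzero [simp]: "zeta e \<noteq> 0"
  by (simp add: zeta_def)

lemma root_of_unity_eq_zeta_power:
  assumes "e > 0" "z ^ e = 1"
  obtains j where "j < e" "z = zeta e ^ j"
proof -
  have "z \<in> (\<lambda>k. cis (2 * pi * real k / real e)) ` {..<e}"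
    using bij_betw_roots_unity[OF assms(1)] assms(2) unfolding bij_betw_def by auto
  then show ?thesis using that zeta_power_eq_cis[OF assms(1)] by auto
qed

lemma zeta_power_neq_1:
  assumes "0 < k" "k < e"
  shows "zeta e ^ k \<noteq> 1"
proof
  let ?f = "\<lambda>k. cis (2 * pi * real k / real e)"
  assume "zeta e ^ k = 1"
  then have eq: "?f k = ?f 0"
    using zeta_power_eq_cis[of e k] assms by simp
  have "inj_on ?f {..<e}"
    using bij_betw_roots_unity[of e] assms unfolding bij_betw_def by auto
  from inj_onD[OF this eq] have "k = 0"
    using assms by simp
  then show False using assms by simp
qed

lemma zeta_power_inverse_root:
  assumes "e > 0" "z ^ e = 1"
  obtains i where "i < e" "zeta e ^ i * z = 1"
proof -
  obtain j where j: "j < e" "z = zeta e ^ j"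
    using root_of_unity_eq_zeta_power[OF assms] .
  show thesis
  proof (cases "j = 0")
    case False
    then have "zeta e ^ (e - j) * z = 1"
      using j zeta_power_self[OF assms(1)] by (simp flip: power_add)
    then show thesis using that[of "e - j"] False assms(1) by simp
  qed (use that[of 0] j assms(1) in simp)
qed

definition monomial :: "nat \<Rightarrow> (nat \<Rightarrow> nat) \<Rightarrow> (nat \<Rightarrow> complex) \<Rightarrow> cmat" where
  "monomial n s a = (\<lambda>r c. if r \<in> {1..n} \<and> c = s r then a r else 0)"

definition Geen_data :: "nat \<Rightarrow> nat \<Rightarrow> (nat \<Rightarrow> nat) \<Rightarrow> (nat \<Rightarrow> complex) \<Rightarrow> bool" where
  "Geen_data e n s a \<longleftrightarrow>
     bij_betw s {1..n} {1..n} \<and> (\<forall>r\<in>{1..n}. a r ^ e = 1) \<and> prod a {1..n} = 1"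

lemma monomial_mult:
  assumes "s ` {1..n} \<subseteq> {1..n}"
  shows "mmult n (monomial n s a) (monomial n t b) = monomial n (t \<circ> s) (\<lambda>r. a r * b (s r))"
proof (intro ext)
  fix i j
  show "mmult n (monomial n s a) (monomial n t b) i j = monomial n (t \<circ> s) (\<lambda>r. a r * b (s r)) i j"
  proof (cases "i \<in> {1..n}")
    case True
    then have "s i \<in> {1..n}" using assms by blast
    have "mmult n (monomial n s a) (monomial n t b) i j =
          (\<Sum>k\<in>{1..n}. if k = s i then a i * monomial n t b k j else 0)"
      unfolding mmult_def using True by (intro sum.cong) (auto simp: monomial_def)
    also have "\<dots> = a i * monomial n t b (s i) j" using \<open>s i \<in> {1..n}\<close> by simp
    finally show ?thesis using True \<open>s i \<in> {1..n}\<close> by (auto simp: monomial_def)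
  qed (auto simp: mmult_def monomial_def)
qed

lemma monomial_cong:
  assumes "\<And>r. r \<in> {1..n} \<Longrightarrow> s r = s' r \<and> a r = a' r"
  shows "monomial n s a = monomial n s' a'"
  using assms unfolding monomial_def by (intro ext) auto

lemma monomial_eqD:
  assumes "monomial n s a = monomial n s' a'" "r \<in> {1..n}" "a r \<noteq> 0"
  shows "s' r = s r \<and> a' r = a r"
proof -
  have "monomial n s a r (s r) = monomial n s' a' r (s r)" using assms(1) by simp
  then show ?thesis using assms(2,3) unfolding monomial_def by (auto split: if_splits)
qed

lemma idm_eq_monomial: "idm n = monomial n id (\<lambda>_. 1)"
  unfolding idm_def monomial_def by (intro ext) auto

lemma Geen_data_nonzero: "Geen_data e n s a \<Longrightarrow> e > 0 \<Longrightarrow> r \<in> {1..n} \<Longrightarrow> a r \<noteq> 0"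
  unfolding Geen_data_def by (metis power_0_left zero_neq_one neq0_conv)

lemma Geen_data_maps_to: "Geen_data e n s a \<Longrightarrow> r \<in> {1..n} \<Longrightarrow> s r \<in> {1..n}"
  unfolding Geen_data_def bij_betw_def by blast

lemma Geen_data_inj_on: "Geen_data e n s a \<Longrightarrow> inj_on s {1..n}"
  unfolding Geen_data_def bij_betw_def by blast

lemma prod_monomial_entries:
  assumes "s ` {1..n} \<subseteq> {1..n}" "\<And>r. r \<in> {1..n} \<Longrightarrow> a r \<noteq> 0"
  shows "(\<Prod>i\<in>{1..n}. \<Prod>j\<in>{1..n}. if monomial n s a i j \<noteq> 0 then monomial n s a i j else 1)
       = prod a {1..n}"
proof (rule prod.cong[OF refl])
  fix i assume i: "i \<in> {1..n}"
  have "(\<Prod>j\<in>{1..n}. if monomial n s a i j \<noteq> 0 then monomial n s a i j else 1)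
        = (\<Prod>j\<in>{1..n}. if j = s i then a i else 1)"
    using i assms(2)[OF i] by (intro prod.cong) (auto simp: monomial_def)
  also have "\<dots> = a i" using assms(1) i by (simp add: prod.delta image_subset_iff)
  finally show "(\<Prod>j\<in>{1..n}. if monomial n s a i j \<noteq> 0 then monomial n s a i j else 1) = a i" .
qed

lemma monomial_in_Geen:
  assumes V: "Geen_data e n s a" and e: "e > 0"
  shows "monomial n s a \<in> Geen e n"
proof -
  have b: "bij_betw s {1..n} {1..n}" and p: "prod a {1..n} = 1"
    and root: "\<And>r. r \<in> {1..n} \<Longrightarrow> a r ^ e = 1"
    using V unfolding Geen_data_def by auto
  have nz: "\<And>r. r \<in> {1..n} \<Longrightarrow> a r \<noteq> 0" using Geen_data_nonzero[OF V e] .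
  have im: "s ` {1..n} \<subseteq> {1..n}" using b by (simp add: bij_betw_def)
  have rows: "\<exists>!j. j \<in> {1..n} \<and> monomial n s a i j \<noteq> 0" if i: "i \<in> {1..n}" for i
  proof (rule ex1I[of _ "s i"])
    show "s i \<in> {1..n} \<and> monomial n s a i (s i) \<noteq> 0"
      using i nz Geen_data_maps_to[OF V i] by (simp add: monomial_def)
  qed (simp add: monomial_def split: if_splits)
  have cols: "\<exists>!i. i \<in> {1..n} \<and> monomial n s a i j \<noteq> 0" if j: "j \<in> {1..n}" for j
  proof -
    have "j \<in> s ` {1..n}" using b j by (simp add: bij_betw_def)
    then obtain i where i: "i \<in> {1..n}" "s i = j" by blast
    show ?thesis
    proof (rule ex1I[of _ i])
      show "i \<in> {1..n} \<and> monomial n s a i j \<noteq> 0" using i nz by (simp add: monomial_def)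
    next
      fix i' assume "i' \<in> {1..n} \<and> monomial n s a i' j \<noteq> 0"
      then show "i' = i"
        using i inj_onD[OF Geen_data_inj_on[OF V], of i' i] by (simp add: monomial_def split: if_splits)
    qed
  qed
  have "(\<Prod>i\<in>{1..n}. \<Prod>j\<in>{1..n}. if monomial n s a i j \<noteq> 0 then monomial n s a i j else 1) = 1"
    using prod_monomial_entries[of s n a, OF im nz] p by simp
  moreover have "\<forall>i j. i \<notin> {1..n} \<or> j \<notin> {1..n} \<longrightarrow> monomial n s a i j = 0"
    using Geen_data_maps_to[OF V] by (auto simp: monomial_def)
  moreover have "\<forall>i j. monomial n s a i j \<noteq> 0 \<longrightarrow> monomial n s a i j ^ e = 1"
    using root by (simp add: monomial_def)
  ultimately show ?thesis
    unfolding Geen_def mem_Collect_eq using rows cols by (intro conjI ballI) simp_all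
qed

lemma Geen_monomialE:
  assumes "w \<in> Geen e n"
  obtains s a where "Geen_data e n s a" "w = monomial n s a"
proof -
  let ?R = "{1..n}"
  have out: "\<And>i j. i \<notin> ?R \<or> j \<notin> ?R \<Longrightarrow> w i j = 0"
    and row: "\<And>i. i \<in> ?R \<Longrightarrow> \<exists>!j. j \<in> ?R \<and> w i j \<noteq> 0"
    and col: "\<And>j. j \<in> ?R \<Longrightarrow> \<exists>!i. i \<in> ?R \<and> w i j \<noteq> 0"
    and root: "\<And>i j. w i j \<noteq> 0 \<Longrightarrow> w i j ^ e = 1"
    and prod: "(\<Prod>i\<in>?R. \<Prod>j\<in>?R. if w i j \<noteq> 0 then w i j else 1) = 1"
    using assms unfolding Geen_def by simp_all
  define s where "s i = (THE j. j \<in> ?R \<and> w i j \<noteq> 0)" for i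
  define a where "a i = w i (s i)" for i
  have s: "s i \<in> ?R" "a i \<noteq> 0" if "i \<in> ?R" for i
    using theI'[OF row[OF that]] unfolding s_def a_def by auto
  have s_unique: "j = s i" if "i \<in> ?R" "j \<in> ?R" "w i j \<noteq> 0" for i j
    using the1_equality[OF row[OF that(1)]] that unfolding s_def by auto
  have w: "w = monomial n s a"
  proof (intro ext)
    fix i j
    show "w i j = monomial n s a i j"
      by (cases "w i j = 0") (use out s_unique s in \<open>auto simp: monomial_def a_def\<close>)
  qed
  have "inj_on s ?R"
  proof (rule inj_onI)
    fix i i' assume "i \<in> ?R" "i' \<in> ?R" "s i = s i'"
    then show "i = i'" using col[of "s i"] s[of i] s[of i'] unfolding a_def by (auto simp: Ex1_def)
  qed
  moreover have "s ` ?R = ?R"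
  proof
    show "?R \<subseteq> s ` ?R"
      using col s_unique by (metis (no_types, lifting) ex1_implies_ex image_eqI subsetI)
  qed (use s in auto)
  moreover have "prod a ?R = 1"
    using prod prod_monomial_entries[of s n a] s unfolding w by (auto simp: image_subset_iff)
  moreover have "\<forall>r\<in>?R. a r ^ e = 1" using root s(2) unfolding a_def by blast
  ultimately show ?thesis using that w unfolding Geen_data_def bij_betw_def by blast
qed

lemma Geen_data_mult:
  assumes "Geen_data e n s a" "Geen_data e n t b"
  shows "Geen_data e n (t \<circ> s) (\<lambda>r. a r * b (s r))"
proof -
  have bs: "bij_betw s {1..n} {1..n}" and bt: "bij_betw t {1..n} {1..n}"
    using assms unfolding Geen_data_def by auto
  have "(\<Prod>r\<in>{1..n}. b (s r)) = prod b {1..n}"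
    using prod.reindex_bij_betw[OF bs, of b] .
  then show ?thesis
    using assms bij_betw_trans[OF bs bt] bs unfolding Geen_data_def bij_betw_def
    by (auto simp: power_mult_distrib prod.distrib)
qed

lemma Geen_data_inv:
  assumes V: "Geen_data e n s a"
  shows "Geen_data e n (inv_into {1..n} s) (\<lambda>r. inverse (a (inv_into {1..n} s r)))"
proof -
  let ?si = "inv_into {1..n} s"
  have b: "bij_betw s {1..n} {1..n}" using V unfolding Geen_data_def by auto
  have bi: "bij_betw ?si {1..n} {1..n}" using bij_betw_inv_into[OF b] .
  have "(\<Prod>r\<in>{1..n}. a (?si r)) = prod a {1..n}"
    using prod.reindex_bij_betw[OF bi, of a] .
  then show ?thesis
    using V bi unfolding Geen_data_def
    using prod_inversef[of "\<lambda>r. a (?si r)" "{1..n}"]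
    by (auto simp: power_inverse comp_def bij_betw_def)
qed

lemma ginv_monomial:
  assumes V: "Geen_data e n s a" and e: "e > 0"
  shows "ginv e n (monomial n s a)
       = monomial n (inv_into {1..n} s) (\<lambda>r. inverse (a (inv_into {1..n} s r)))"
    (is "_ = monomial n ?si ?ai")
proof -
  let ?R = "{1..n}"
  have b: "bij_betw s ?R ?R" using V unfolding Geen_data_def by auto
  have nz: "\<And>r. r \<in> ?R \<Longrightarrow> a r \<noteq> 0" using Geen_data_nonzero[OF V e] .
  have im: "s ` ?R \<subseteq> ?R" using b by (simp add: bij_betw_def)
  have imi: "?si r \<in> ?R" if "r \<in> ?R" for r
    using bij_betw_apply[OF bij_betw_inv_into[OF b] that] .
  have right_inverse: "mmult n (monomial n s a) (monomial n ?si ?ai) = idm n"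
    unfolding monomial_mult[OF im] idm_eq_monomial
    by (rule monomial_cong) (use nz bij_betw_inv_into_left[OF b] in auto)
  show ?thesis unfolding ginv_def
  proof (rule the_equality)
    show "monomial n ?si ?ai \<in> Geen e n \<and> mmult n (monomial n s a) (monomial n ?si ?ai) = idm n"
      using monomial_in_Geen[OF Geen_data_inv[OF V] e] right_inverse by simp
  next
    fix u assume u: "u \<in> Geen e n \<and> mmult n (monomial n s a) u = idm n"
    then obtain t c where Vt: "Geen_data e n t c" and ueq: "u = monomial n t c"
      using Geen_monomialE by blast
    have eq: "monomial n (t \<circ> s) (\<lambda>r. a r * c (s r)) = monomial n id (\<lambda>_. 1)"
      using u unfolding ueq monomial_mult[OF im] idm_eq_monomial by simp
    have h: "t (s r) = r \<and> a r * c (s r) = 1" if r: "r \<in> ?R" for r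
      using monomial_eqD[OF eq r] Geen_data_maps_to[OF V r] nz[OF r] Geen_data_nonzero[OF Vt e]
      by simp
    show "u = monomial n ?si ?ai" unfolding ueq
    proof (rule monomial_cong)
      fix r assume r: "r \<in> ?R"
      have "s (?si r) = r" using bij_betw_inv_into_right[OF b r] .
      then show "t r = ?si r \<and> c r = ?ai r"
        using h[OF imi[OF r]] by (auto simp: inverse_unique mult.commute)
    qed
  qed
qed

lemma monomial_eq_iff:
  assumes "\<And>r. r \<in> {1..n} \<Longrightarrow> a r \<noteq> 0"
  shows "monomial n s a = monomial n s' a' \<longleftrightarrow> (\<forall>r\<in>{1..n}. s' r = s r \<and> a' r = a r)"
  using monomial_eqD[of n s a s' a'] assms monomial_cong[of n s' s a' a] by metis

definition t_weights :: "nat \<Rightarrow> nat \<Rightarrow> nat \<Rightarrow> complex" where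
  "t_weights e i r = (if r = 1 then inverse (zeta e ^ i) else if r = 2 then zeta e ^ i else 1)"

lemma tgen_eq_monomial: "n \<ge> 2 \<Longrightarrow> tgen e n (int i) = monomial n (transpose 1 2) (t_weights e i)"
  unfolding tgen_def monomial_def t_weights_def transpose_def
  by (intro ext) (auto simp: power_int_minus)

lemma sgen_eq_monomial: "3 \<le> m \<Longrightarrow> m \<le> n \<Longrightarrow> sgen n m = monomial n (transpose (m - 1) m) (\<lambda>_. 1)"
  unfolding sgen_def monomial_def transpose_def by (intro ext) auto

text \<open>Weights b of a generator with permutation (m-1 m): t_i for m = 2, s_m for m \<ge> 3.\<close>
definition generator_data :: "nat \<Rightarrow> nat \<Rightarrow> nat \<Rightarrow> (nat \<Rightarrow> complex) \<Rightarrow> bool" where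
  "generator_data e n m b \<longleftrightarrow> m \<in> {2..n} \<and> Geen_data e n (transpose (m - 1) m) b \<and>
     (\<forall>q. b q \<noteq> 1 \<longrightarrow> m = 2 \<and> q \<le> 2) \<and> (\<forall>r. b r * b (transpose (m - 1) m r) = 1)"

lemma generator_data_t_weights:
  assumes "n \<ge> 2" "e > 0"
  shows "generator_data e n 2 (t_weights e i)"
proof -
  have "(zeta e ^ i) ^ e = 1"
    using zeta_power_self[OF assms(2)] by (metis power_mult mult.commute power_one)
  then have "\<forall>r\<in>{1..n}. t_weights e i r ^ e = 1"
    by (auto simp: t_weights_def power_inverse)
  moreover have "prod (t_weights e i) {1..n} = prod (t_weights e i) {1, 2}"
    using assms(1) by (intro prod.mono_neutral_right) (auto simp: t_weights_def)
  ultimately show ?thesis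
    using assms(1) unfolding generator_data_def Geen_data_def
    by (auto simp: t_weights_def transpose_def)
qed

lemma generator_data_sgen: "3 \<le> m \<Longrightarrow> m \<le> n \<Longrightarrow> generator_data e n m (\<lambda>_. 1)"
  unfolding generator_data_def Geen_data_def by (auto intro!: bij_betw_transpose_iff)

lemma tgen_in_gens: "i < e \<Longrightarrow> tgen e n (int i) \<in> gens e n"
  unfolding gens_def by blast

lemma sgen_in_gens: "3 \<le> m \<Longrightarrow> m \<le> n \<Longrightarrow> sgen n m \<in> gens e n"
  unfolding gens_def by blast

lemma gens_monomialE:
  assumes "g \<in> gens e n" "n \<ge> 2" "e > 0"
  obtains m b where "generator_data e n m b" "g = monomial n (transpose (m - 1) m) b"
proof -
  from assms(1) consider (t) i where "g = tgen e n (int i)"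
    | (s) m where "3 \<le> m" "m \<le> n" "g = sgen n m"
    unfolding gens_def by blast
  then show thesis
  proof cases
    case t
    then show thesis
      using that[of 2 "t_weights e i"] tgen_eq_monomial generator_data_t_weights assms by simp
  next
    case s
    then show thesis
      using that[of m "\<lambda>_. 1"] sgen_eq_monomial generator_data_sgen by simp
  qed
qed

lemma generator_mult_monomial:
  assumes "generator_data e n m b"
  shows "mmult n (monomial n (transpose (m - 1) m) b) (monomial n s a)
       = monomial n (s \<circ> transpose (m - 1) m) (\<lambda>r. b r * a (transpose (m - 1) m r))"
  using assms Geen_data_maps_to unfolding generator_data_def
  by (intro monomial_mult) blast

lemma wprod_Cons: "wprod n (g # ws) = mmult n g (wprod n ws)"
  unfolding wprod_def by simp

lemma wprod_in_Geen:
  assumes "set ws \<subseteq> gens e n" "n \<ge> 2" "e > 0"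
  shows "wprod n ws \<in> Geen e n"
  using assms(1)
proof (induction ws)
  case Nil
  then show ?case
    using monomial_in_Geen[of e n id "\<lambda>_. 1"] assms(3)
    by (simp add: wprod_def idm_eq_monomial Geen_data_def)
next
  case (Cons g ws)
  obtain m b where b: "generator_data e n m b" and g: "g = monomial n (transpose (m - 1) m) b"
    using gens_monomialE[of g e n] Cons.prems assms by auto
  obtain s a where V: "Geen_data e n s a" and ws: "wprod n ws = monomial n s a"
    using Geen_monomialE[OF Cons.IH] Cons.prems by auto
  have "Geen_data e n (transpose (m - 1) m) b" using b unfolding generator_data_def by blast
  then show ?case
    unfolding wprod_Cons g ws generator_mult_monomial[OF b]
    by (intro monomial_in_Geen Geen_data_mult V assms(3))
qed

definition pairs :: "nat \<Rightarrow> (nat \<times> nat) set" where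
  "pairs n = {(p, q). p \<in> {1..n} \<and> q \<in> {1..n} \<and> p < q}"

definition inversions :: "nat \<Rightarrow> (nat \<Rightarrow> nat) \<Rightarrow> (nat \<times> nat) set" where
  "inversions n s = {(p, q) \<in> pairs n. s q < s p}"

definition ascents :: "nat \<Rightarrow> (nat \<Rightarrow> nat) \<Rightarrow> (nat \<times> nat) set" where
  "ascents n s = {(p, q) \<in> pairs n. s p < s q}"

definition monomial_length :: "nat \<Rightarrow> (nat \<Rightarrow> nat) \<Rightarrow> (nat \<Rightarrow> complex) \<Rightarrow> nat" where
  "monomial_length n s a = card (inversions n s) + 2 * card {(p, q) \<in> ascents n s. a q \<noteq> 1}"

text \<open>The contribution to monomial_length of a pair p < q with s p = x, s q = y and a q = z.\<close>
definition pair_weight :: "nat \<Rightarrow> nat \<Rightarrow> complex \<Rightarrow> nat" where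
  "pair_weight x y z = (if y < x then 1 else if x < y \<and> z \<noteq> 1 then 2 else 0)"

lemma finite_pairs [simp]: "finite (pairs n)"
  by (rule finite_subset[of _ "{1..n} \<times> {1..n}"]) (auto simp: pairs_def)

lemma finite_inversions [simp]: "finite (inversions n s)"
  by (rule finite_subset[OF _ finite_pairs]) (auto simp: inversions_def)

lemma finite_ascents [simp]: "finite (ascents n s)"
  by (rule finite_subset[OF _ finite_pairs]) (auto simp: ascents_def)

lemma finite_ascents_filter [simp]: "finite {(p, q) \<in> ascents n s. P q}"
  by (rule finite_subset[OF _ finite_pairs]) (auto simp: ascents_def)

lemma monomial_length_cong:
  assumes "\<And>r. r \<in> {1..n} \<Longrightarrow> s r = s' r \<and> a r = a' r"
  shows "monomial_length n s a = monomial_length n s' a'"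
proof -
  have "inversions n s = inversions n s'" "ascents n s = ascents n s'"
    using assms unfolding inversions_def ascents_def pairs_def by auto
  moreover have "{(p, q) \<in> ascents n s. a q \<noteq> 1} = {(p, q) \<in> ascents n s. a' q \<noteq> 1}"
    using assms unfolding ascents_def pairs_def by auto
  ultimately show ?thesis unfolding monomial_length_def by simp
qed

lemma monomial_length_id: "monomial_length n id (\<lambda>_. 1) = 0"
proof -
  have "inversions n id = {}" by (auto simp: inversions_def pairs_def)
  then show ?thesis by (simp add: monomial_length_def)
qed

lemma transpose_pairs:
  assumes "m \<in> {2..n}" "x \<in> pairs n - {(m - 1, m)}"
  shows "map_prod (transpose (m - 1) m) (transpose (m - 1) m) x \<in> pairs n - {(m - 1, m)}"
  using assms unfolding pairs_def transpose_def by (cases x) (auto split: if_splits)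

lemma card_transpose_pairs:
  fixes A B :: "(nat \<times> nat) set" and m n :: nat
  defines "\<tau> \<equiv> map_prod (transpose (m - 1) m) (transpose (m - 1) m)"
  assumes m: "m \<in> {2..n}" and AB: "A \<subseteq> pairs n" "B \<subseteq> pairs n"
    and P: "\<And>x. x \<in> pairs n - {(m - 1, m)} \<Longrightarrow> x \<in> A \<longleftrightarrow> \<tau> x \<in> B"
  shows "card (A - {(m - 1, m)}) = card (B - {(m - 1, m)})"
proof (rule bij_betw_same_card[of \<tau>], rule bij_betw_byWitness[of _ \<tau>])
  have inv: "\<tau> (\<tau> x) = x" for x
    unfolding \<tau>_def by (cases x) simp
  then show "\<forall>x\<in>A - {(m - 1, m)}. \<tau> (\<tau> x) = x" "\<forall>x\<in>B - {(m - 1, m)}. \<tau> (\<tau> x) = x"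
    by auto
  have \<tau>: "\<tau> x \<in> pairs n - {(m - 1, m)}" if "x \<in> pairs n - {(m - 1, m)}" for x
    using transpose_pairs[OF m that] unfolding \<tau>_def .
  show "\<tau> ` (A - {(m - 1, m)}) \<subseteq> B - {(m - 1, m)}"
  proof
    fix y assume "y \<in> \<tau> ` (A - {(m - 1, m)})"
    then obtain x where x: "x \<in> A - {(m - 1, m)}" "y = \<tau> x" by blast
    then have x': "x \<in> pairs n - {(m - 1, m)}" using AB by blast
    show "y \<in> B - {(m - 1, m)}" using P[OF x'] \<tau>[OF x'] x by simp
  qed
  show "\<tau> ` (B - {(m - 1, m)}) \<subseteq> A - {(m - 1, m)}"
  proof
    fix y assume "y \<in> \<tau> ` (B - {(m - 1, m)})"
    then obtain x where x: "x \<in> B - {(m - 1, m)}" "y = \<tau> x" by blast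
    then have "x \<in> pairs n - {(m - 1, m)}" using AB by blast
    then have "y \<in> pairs n - {(m - 1, m)}" using \<tau> x by simp
    then show "y \<in> A - {(m - 1, m)}" using P[of y] x inv by simp
  qed
qed

lemma inj_on_adjacent_neq: "inj_on s {1..n} \<Longrightarrow> m \<in> {2..n} \<Longrightarrow> s (m - 1) \<noteq> s (m :: nat)"
  using inj_onD[of s "{1..n}" "m - 1" m] by fastforce

lemma card_eq_card_Diff_singleton:
  "finite A \<Longrightarrow> card A = card (A - {x}) + (if x \<in> A then 1 else 0)"
  by (cases "x \<in> A") (use card_Suc_Diff1[of A x] in simp_all)

text \<open>Composing with the transposition (m-1 m) permutes the pairs other than (m-1, m) among
  themselves, so only the contribution of (m-1, m) changes.\<close>
lemma monomial_length_transpose: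
  assumes m: "m \<in> {2..n}" and inj: "inj_on s {1..n}"
    and a': "\<And>p q. (p, q) \<in> pairs n - {(m - 1, m)} \<Longrightarrow> a' q = a (transpose (m - 1) m q)"
  shows "monomial_length n (s \<circ> transpose (m - 1) m) a' + pair_weight (s (m - 1)) (s m) (a m)
       = monomial_length n s a + pair_weight (s m) (s (m - 1)) (a' m)"
proof -
  let ?x = "(m - 1, m)" and ?t = "s \<circ> transpose (m - 1) m"
  have x: "?x \<in> pairs n" using m unfolding pairs_def by auto
  have inv: "card (inversions n ?t - {?x}) = card (inversions n s - {?x})"
    by (rule card_transpose_pairs[OF m]) (use transpose_pairs[OF m] in \<open>auto simp: inversions_def\<close>)
  have asc: "card ({(p, q) \<in> ascents n ?t. a' q \<noteq> 1} - {?x})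
           = card ({(p, q) \<in> ascents n s. a q \<noteq> 1} - {?x})"
  proof (rule card_transpose_pairs[OF m])
    fix x assume x: "x \<in> pairs n - {?x}"
    moreover obtain p q where "x = (p, q)" by fastforce
    ultimately show "x \<in> {(p, q) \<in> ascents n ?t. a' q \<noteq> 1} \<longleftrightarrow>
      map_prod (transpose (m - 1) m) (transpose (m - 1) m) x \<in> {(p, q) \<in> ascents n s. a q \<noteq> 1}"
      using transpose_pairs[OF m x] a'[of p q] by (auto simp: ascents_def)
  qed (auto simp: ascents_def)
  have it: "?x \<in> inversions n ?t \<longleftrightarrow> s (m - 1) < s m"
    and iss: "?x \<in> inversions n s \<longleftrightarrow> s m < s (m - 1)"
    and at: "?x \<in> {(p, q) \<in> ascents n ?t. a' q \<noteq> 1} \<longleftrightarrow> s m < s (m - 1) \<and> a' m \<noteq> 1"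
    and as: "?x \<in> {(p, q) \<in> ascents n s. a q \<noteq> 1} \<longleftrightarrow> s (m - 1) < s m \<and> a m \<noteq> 1"
    using x by (simp_all add: inversions_def ascents_def)
  have "card (inversions n ?t) = card (inversions n s - {?x}) + (if s (m - 1) < s m then 1 else 0)"
    using card_eq_card_Diff_singleton[OF finite_inversions, of n ?t ?x] unfolding inv it .
  moreover have "card (inversions n s) = card (inversions n s - {?x}) + (if s m < s (m - 1) then 1 else 0)"
    using card_eq_card_Diff_singleton[OF finite_inversions, of n s ?x] unfolding iss .
  moreover have "card {(p, q) \<in> ascents n ?t. a' q \<noteq> 1}
      = card ({(p, q) \<in> ascents n s. a q \<noteq> 1} - {?x}) + (if s m < s (m - 1) \<and> a' m \<noteq> 1 then 1 else 0)"
    using card_eq_card_Diff_singleton[OF finite_ascents_filter[of n ?t "\<lambda>q. a' q \<noteq> 1"], of ?x]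
    unfolding asc at .
  moreover have "card {(p, q) \<in> ascents n s. a q \<noteq> 1}
      = card ({(p, q) \<in> ascents n s. a q \<noteq> 1} - {?x}) + (if s (m - 1) < s m \<and> a m \<noteq> 1 then 1 else 0)"
    using card_eq_card_Diff_singleton[OF finite_ascents_filter[of n s "\<lambda>q. a q \<noteq> 1"], of ?x]
    unfolding as .
  ultimately show ?thesis
    using inj_on_adjacent_neq[OF inj m] unfolding monomial_length_def pair_weight_def by auto
qed

lemma monomial_length_generator_mult:
  assumes b: "generator_data e n m b" and V: "Geen_data e n s a"
  shows "monomial_length n (s \<circ> transpose (m - 1) m) (\<lambda>r. b r * a (transpose (m - 1) m r))
         + pair_weight (s (m - 1)) (s m) (a m)
       = monomial_length n s a + pair_weight (s m) (s (m - 1)) (b m * a (m - 1))"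
proof -
  have m: "m \<in> {2..n}" and b1: "\<And>q. b q \<noteq> 1 \<Longrightarrow> m = 2 \<and> q \<le> 2"
    using b unfolding generator_data_def by auto
  have "b q * a (transpose (m - 1) m q) = a (transpose (m - 1) m q)"
    if "(p, q) \<in> pairs n - {(m - 1, m)}" for p q
    using that b1[of q] unfolding pairs_def by fastforce
  from monomial_length_transpose[OF m Geen_data_inj_on[OF V], of "\<lambda>r. b r * a (transpose (m - 1) m r)" a, OF this]
  show ?thesis using m by simp
qed

lemma monomial_length_le_length:
  assumes n: "n \<ge> 2" and e: "e > 0"
  shows "set ws \<subseteq> gens e n \<Longrightarrow> Geen_data e n s a \<Longrightarrow> wprod n ws = monomial n s a
         \<Longrightarrow> monomial_length n s a \<le> length ws"
proof (induction ws arbitrary: s a)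
  case Nil
  then have "\<forall>r\<in>{1..n}. s r = r \<and> a r = 1"
    using monomial_eq_iff[where s=id and a="\<lambda>_. 1" and s'=s and a'=a]
    by (simp add: wprod_def idm_eq_monomial)
  then show ?case
    using monomial_length_cong[of n s id a "\<lambda>_. 1"] by (simp add: monomial_length_id)
next
  case (Cons g ws)
  obtain m b where b: "generator_data e n m b" and g: "g = monomial n (transpose (m - 1) m) b"
    using gens_monomialE[of g e n] Cons.prems(1) n e by auto
  obtain t c where V: "Geen_data e n t c" and ws: "wprod n ws = monomial n t c"
    using Geen_monomialE[OF wprod_in_Geen[of ws e n]] Cons.prems(1) n e by auto
  let ?t = "t \<circ> transpose (m - 1) m" and ?c = "\<lambda>r. b r * c (transpose (m - 1) m r)"
  have V': "Geen_data e n ?t ?c"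
    using Geen_data_mult[OF _ V] b unfolding generator_data_def by blast
  have eq: "monomial n ?t ?c = monomial n s a"
    using Cons.prems(3) unfolding wprod_Cons g ws generator_mult_monomial[OF b] .
  have "monomial_length n s a = monomial_length n ?t ?c"
    using monomial_eqD[OF eq _ Geen_data_nonzero[OF V' e]] by (intro monomial_length_cong) simp
  moreover have "monomial_length n t c \<le> length ws"
    using Cons.IH[OF _ V ws] Cons.prems(1) by simp
  moreover have "t (m - 1) \<noteq> t m"
    using b inj_on_adjacent_neq[OF Geen_data_inj_on[OF V]] unfolding generator_data_def by blast
  then have "pair_weight (t m) (t (m - 1)) (b m * c (m - 1)) \<le> pair_weight (t (m - 1)) (t m) (c m) + 1"
    unfolding pair_weight_def by auto
  ultimately show ?case
    using monomial_length_generator_mult[OF b V] by simp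
qed

lemma increasing_self_map_eq_id:
  fixes s :: "nat \<Rightarrow> nat"
  assumes inc: "\<And>r. 2 \<le> r \<Longrightarrow> r \<le> n \<Longrightarrow> s (r - 1) < s r"
    and maps: "\<And>r. r \<in> {1..n} \<Longrightarrow> s r \<in> {1..n}"
    and r: "r \<in> {1..n}"
  shows "s r = r"
proof -
  have lower: "r \<le> s r" if "1 \<le> r" "r \<le> n" for r
    using that
  proof (induction r rule: nat_induct_at_least)
    case base then show ?case using maps[of 1] by simp
  next
    case (Suc r) then show ?case using inc[of "Suc r"] by simp
  qed
  have upper: "s (n - k) \<le> n - k" if "k < n" for k
    using that
  proof (induction k)
    case 0 then show ?case using maps[of n] by simp
  next
    case (Suc k)
    have "n - k - 1 = n - Suc k" by simp
    then have "s (n - Suc k) < s (n - k)" using inc[of "n - k"] Suc.prems by simp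
    then show ?case using Suc by simp
  qed
  show ?thesis using lower[of r] upper[of "n - r"] r by simp
qed

lemma trivial_of_no_descent:
  assumes V: "Geen_data e n s a" and n: "n \<ge> 2" and "s 1 < s 2" "a 2 = 1"
    and no_descent: "\<And>m. 3 \<le> m \<Longrightarrow> m \<le> n \<Longrightarrow>
      (s (m - 1) < s m \<longrightarrow> a m = 1) \<and> (s m < s (m - 1) \<longrightarrow> a (m - 1) \<noteq> 1)"
  shows "\<forall>r\<in>{1..n}. s r = r \<and> a r = 1"
proof -
  have step: "s (r - 1) < s r \<and> a r = 1" if "2 \<le> r" "r \<le> n" for r
    using that
  proof (induction r rule: nat_induct_at_least)
    case base then show ?case using assms by simp
  next
    case (Suc r)
    have "s r \<noteq> s (Suc r)"
      using inj_on_adjacent_neq[OF Geen_data_inj_on[OF V], of "Suc r"] Suc by simp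
    then show ?case using Suc no_descent[of "Suc r"] by auto
  qed
  have s: "s r = r" if "r \<in> {1..n}" for r
    by (rule increasing_self_map_eq_id[OF _ Geen_data_maps_to[OF V] that]) (use step in blast)
  have "{1..n} = insert 1 {2..n}" using n by auto
  then have "prod a {1..n} = a 1 * prod a {2..n}" by simp
  moreover have "prod a {2..n} = 1" using step by simp
  ultimately have "a 1 = 1" using V unfolding Geen_data_def by simp
  show ?thesis
  proof
    fix r assume r: "r \<in> {1..n}"
    show "s r = r \<and> a r = 1"
      by (cases "r = 1") (use s[OF r] step[of r] r \<open>a 1 = 1\<close> in auto)
  qed
qed

lemma length_descent:
  assumes V: "Geen_data e n s a" and n: "n \<ge> 2" and e: "e > 0"
    and nontrivial: "\<not> (\<forall>r\<in>{1..n}. s r = r \<and> a r = 1)"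
  obtains m b where "generator_data e n m b" "monomial n (transpose (m - 1) m) b \<in> gens e n"
    "pair_weight (s (m - 1)) (s m) (a m) = pair_weight (s m) (s (m - 1)) (b m * a (m - 1)) + 1"
proof -
  have "s 1 \<noteq> s 2"
    using inj_on_adjacent_neq[OF Geen_data_inj_on[OF V], of 2] n by simp
  then consider (inversion) "s 2 < s 1" | (ascent) "s 1 < s 2" "a 2 \<noteq> 1"
    | (later) m where "3 \<le> m" "m \<le> n"
        "s (m - 1) < s m \<and> a m \<noteq> 1 \<or> s m < s (m - 1) \<and> a (m - 1) = 1"
    using trivial_of_no_descent[OF V n] nontrivial by (metis linorder_neqE_nat)
  then show thesis
  proof cases
    case inversion
    have "a 1 ^ e = 1" using V n unfolding Geen_data_def by simp
    then obtain i where "i < e" "zeta e ^ i * a 1 = 1"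
      using zeta_power_inverse_root[OF e] by blast
    moreover have "monomial n (transpose 1 2) (t_weights e i) \<in> gens e n"
      using tgen_eq_monomial[OF n, of e i] tgen_in_gens[of i e n] calculation by simp
    ultimately show thesis
      using that[of 2 "t_weights e i"] generator_data_t_weights[OF n e] inversion
      by (simp add: pair_weight_def t_weights_def)
  next
    case ascent
    have "monomial n (transpose 1 2) (t_weights e 0) \<in> gens e n"
      using tgen_eq_monomial[OF n, of e 0] tgen_in_gens[of 0 e n] e by simp
    then show thesis
      using that[of 2 "t_weights e 0"] generator_data_t_weights[OF n e] ascent
      by (simp add: pair_weight_def t_weights_def)
  next
    case later
    have "monomial n (transpose (m - 1) m) (\<lambda>_. 1) \<in> gens e n"
      using sgen_eq_monomial[OF later(1,2)] sgen_in_gens[OF later(1,2)] by simp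
    then show thesis
      using that[of m "\<lambda>_. 1"] generator_data_sgen[OF later(1,2)] later(3)
      by (auto simp: pair_weight_def)
  qed
qed

lemma exists_word_of_monomial_length:
  assumes n: "n \<ge> 2" and e: "e > 0"
  shows "Geen_data e n s a \<Longrightarrow>
    \<exists>ws. set ws \<subseteq> gens e n \<and> length ws = monomial_length n s a \<and> wprod n ws = monomial n s a"
proof (induction "monomial_length n s a" arbitrary: s a rule: less_induct)
  case less
  note V = less.prems
  show ?case
  proof (cases "\<forall>r\<in>{1..n}. s r = r \<and> a r = 1")
    case True
    then have "monomial_length n s a = 0" "monomial n s a = idm n"
      using monomial_length_cong[of n s id a "\<lambda>_. 1"] monomial_cong[of n s id a "\<lambda>_. 1"]
      by (simp_all add: monomial_length_id idm_eq_monomial)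
    then show ?thesis by (intro exI[of _ "[]"]) (simp add: wprod_def)
  next
    case False
    obtain m b where b: "generator_data e n m b" and g: "monomial n (transpose (m - 1) m) b \<in> gens e n"
      and drop: "pair_weight (s (m - 1)) (s m) (a m) = pair_weight (s m) (s (m - 1)) (b m * a (m - 1)) + 1"
      using length_descent[OF V n e False] by blast
    let ?t = "s \<circ> transpose (m - 1) m" and ?c = "\<lambda>r. b r * a (transpose (m - 1) m r)"
    have shorter: "monomial_length n ?t ?c + 1 = monomial_length n s a"
      using monomial_length_generator_mult[OF b V] drop by simp
    have "Geen_data e n ?t ?c"
      using Geen_data_mult[OF _ V] b unfolding generator_data_def by blast
    then obtain ws where ws: "set ws \<subseteq> gens e n" "length ws = monomial_length n ?t ?c"
      "wprod n ws = monomial n ?t ?c"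
      using less.hyps shorter by force
    have "wprod n (monomial n (transpose (m - 1) m) b # ws) = monomial n s a"
      unfolding wprod_Cons ws(3) generator_mult_monomial[OF b]
      by (rule monomial_cong) (use b in \<open>simp add: generator_data_def mult.assoc[symmetric]\<close>)
    then show ?thesis
      using ws g shorter by (intro exI[of _ "monomial n (transpose (m - 1) m) b # ws"]) simp
  qed
qed

lemma wlen_monomial:
  assumes "Geen_data e n s a" "n \<ge> 2" "e > 0"
  shows "wlen e n (monomial n s a) = monomial_length n s a"
  unfolding wlen_def
proof (rule Least_equality)
  show "\<exists>ws. set ws \<subseteq> gens e n \<and> length ws = monomial_length n s a \<and> wprod n ws = monomial n s a"
    using exists_word_of_monomial_length[OF assms(2,3,1)] .
next
  fix k assume "\<exists>ws. set ws \<subseteq> gens e n \<and> length ws = k \<and> wprod n ws = monomial n s a"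
  then show "monomial_length n s a \<le> k"
    using monomial_length_le_length[OF assms(2,3) _ assms(1)] by blast
qed

lemma card_inversions_inv_into:
  assumes b: "bij_betw s {1..n} {1..n}"
  shows "card (inversions n (inv_into {1..n} s)) = card (inversions n s)"
proof -
  let ?si = "inv_into {1..n} s"
  have L: "?si (s x) = x" if "x \<in> {1..n}" for x using bij_betw_inv_into_left[OF b that] .
  have R: "s (?si x) = x" if "x \<in> {1..n}" for x using bij_betw_inv_into_right[OF b that] .
  have S: "s x \<in> {1..n}" if "x \<in> {1..n}" for x using bij_betw_apply[OF b that] .
  have SI: "?si x \<in> {1..n}" if "x \<in> {1..n}" for x using bij_betw_apply[OF bij_betw_inv_into[OF b] that] .
  have "bij_betw (\<lambda>(p, q). (s q, s p)) (inversions n s) (inversions n ?si)"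
  proof (rule bij_betw_byWitness[of _ "\<lambda>(p, q). (?si q, ?si p)"])
    show "\<forall>x\<in>inversions n s. (\<lambda>(p, q). (?si q, ?si p)) ((\<lambda>(p, q). (s q, s p)) x) = x"
      using L unfolding inversions_def pairs_def by fastforce
    show "\<forall>x\<in>inversions n ?si. (\<lambda>(p, q). (s q, s p)) ((\<lambda>(p, q). (?si q, ?si p)) x) = x"
      using R unfolding inversions_def pairs_def by fastforce
    show "(\<lambda>(p, q). (s q, s p)) ` inversions n s \<subseteq> inversions n ?si"
      using L S unfolding inversions_def pairs_def by fastforce
    show "(\<lambda>(p, q). (?si q, ?si p)) ` inversions n ?si \<subseteq> inversions n s"
      using R SI unfolding inversions_def pairs_def by fastforce
  qed
  then show ?thesis by (simp add: bij_betw_same_card)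
qed

lemma card_ascents_inv_into:
  assumes b: "bij_betw s {1..n} {1..n}"
  shows "card {(p, q) \<in> ascents n (inv_into {1..n} s). c q \<noteq> 1}
       = card {(p, q) \<in> ascents n s. c (s q) \<noteq> 1}"
proof -
  let ?si = "inv_into {1..n} s"
  have L: "?si (s x) = x" if "x \<in> {1..n}" for x using bij_betw_inv_into_left[OF b that] .
  have R: "s (?si x) = x" if "x \<in> {1..n}" for x using bij_betw_inv_into_right[OF b that] .
  have S: "s x \<in> {1..n}" if "x \<in> {1..n}" for x using bij_betw_apply[OF b that] .
  have SI: "?si x \<in> {1..n}" if "x \<in> {1..n}" for x using bij_betw_apply[OF bij_betw_inv_into[OF b] that] .
  have "bij_betw (\<lambda>(p, q). (s p, s q)) {(p, q) \<in> ascents n s. c (s q) \<noteq> 1}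
          {(p, q) \<in> ascents n ?si. c q \<noteq> 1}"
  proof (rule bij_betw_byWitness[of _ "\<lambda>(p, q). (?si p, ?si q)"])
    show "\<forall>x\<in>{(p, q) \<in> ascents n s. c (s q) \<noteq> 1}.
        (\<lambda>(p, q). (?si p, ?si q)) ((\<lambda>(p, q). (s p, s q)) x) = x"
      using L unfolding ascents_def pairs_def by fastforce
    show "\<forall>x\<in>{(p, q) \<in> ascents n ?si. c q \<noteq> 1}.
        (\<lambda>(p, q). (s p, s q)) ((\<lambda>(p, q). (?si p, ?si q)) x) = x"
      using R unfolding ascents_def pairs_def by fastforce
    show "(\<lambda>(p, q). (s p, s q)) ` {(p, q) \<in> ascents n s. c (s q) \<noteq> 1}
        \<subseteq> {(p, q) \<in> ascents n ?si. c q \<noteq> 1}"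
      using L S unfolding ascents_def pairs_def by fastforce
    show "(\<lambda>(p, q). (?si p, ?si q)) ` {(p, q) \<in> ascents n ?si. c q \<noteq> 1}
        \<subseteq> {(p, q) \<in> ascents n s. c (s q) \<noteq> 1}"
      using R SI unfolding ascents_def pairs_def by fastforce
  qed
  then show ?thesis by (simp add: bij_betw_same_card)
qed

lemma wlen_inv_into_monomial:
  assumes V: "Geen_data e n (inv_into {1..n} s) c" and b: "bij_betw s {1..n} {1..n}"
    and "n \<ge> 2" "e > 0"
  shows "wlen e n (monomial n (inv_into {1..n} s) c)
       = card (inversions n s) + 2 * card {(p, q) \<in> ascents n s. c (s q) \<noteq> 1}"
  using wlen_monomial[OF V assms(3,4)] card_inversions_inv_into[OF b] card_ascents_inv_into[OF b]
  by (simp add: monomial_length_def)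

lemma card_inversions_add_card_ascents:
  assumes "inj_on s {1..n}"
  shows "card (inversions n s) + card (ascents n s) = card (pairs n)"
proof -
  have "s p \<noteq> s q" if "(p, q) \<in> pairs n" for p q
    using that inj_onD[OF assms, of p q] by (auto simp: pairs_def)
  then have "inversions n s \<union> ascents n s = pairs n"
    by (auto simp: inversions_def ascents_def pairs_def nat_neq_iff)
  moreover have "inversions n s \<inter> ascents n s = {}"
    by (auto simp: inversions_def ascents_def)
  ultimately show ?thesis
    using card_Un_disjoint[of "inversions n s" "ascents n s"] by simp
qed

text \<open>Every ascent is counted in at least one of the two filters, so the two lengths add up to
  the length of \<lambda>^k, namely twice the number of pairs, iff no ascent is counted in both.\<close>
lemma length_sum_eq_iff:
  fixes a :: "nat \<Rightarrow> complex"
  assumes "inj_on s {1..n}" "z \<noteq> 1"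
  shows "card (inversions n s) + 2 * card {(p, q) \<in> ascents n s. a q \<noteq> 1}
         + (card (inversions n s) + 2 * card {(p, q) \<in> ascents n s. a q \<noteq> z}) = 2 * card (pairs n)
     \<longleftrightarrow> (\<forall>(p, q)\<in>ascents n s. a q = 1 \<or> a q = z)"
proof -
  let ?X = "{(p, q) \<in> ascents n s. a q \<noteq> 1}" and ?Y = "{(p, q) \<in> ascents n s. a q \<noteq> z}"
  have "?X \<union> ?Y = ascents n s" using assms(2) by auto
  moreover have "?X \<inter> ?Y = {(p, q) \<in> ascents n s. a q \<noteq> 1 \<and> a q \<noteq> z}" by auto
  ultimately have "card ?X + card ?Y = card (ascents n s) + card {(p, q) \<in> ascents n s. a q \<noteq> 1 \<and> a q \<noteq> z}"
    using card_Un_Int[of ?X ?Y] by simp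
  with card_inversions_add_card_ascents[OF assms(1)]
  have "card (inversions n s) + 2 * card ?X + (card (inversions n s) + 2 * card ?Y) = 2 * card (pairs n)
      \<longleftrightarrow> card {(p, q) \<in> ascents n s. a q \<noteq> 1 \<and> a q \<noteq> z} = 0"
    by arith
  also have "\<dots> \<longleftrightarrow> (\<forall>(p, q)\<in>ascents n s. a q = 1 \<or> a q = z)"
    by auto
  finally show ?thesis .
qed

definition lam_weights :: "nat \<Rightarrow> nat \<Rightarrow> nat \<Rightarrow> nat \<Rightarrow> complex" where
  "lam_weights e n k r = (if r = 1 then inverse (zeta e ^ (n - 1)) ^ k else zeta e ^ k)"

lemma mpow_lam_eq_monomial:
  assumes "n \<ge> 1"
  shows "mpow n (lam e n) k = monomial n id (lam_weights e n k)"
proof (induction k)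
  case 0
  show ?case
    unfolding mpow_def idm_eq_monomial by (simp, rule monomial_cong) (simp add: lam_weights_def)
next
  case (Suc k)
  have "lam e n = monomial n id (lam_weights e n 1)"
    unfolding lam_def monomial_def lam_weights_def using assms by (intro ext) auto
  then have "mpow n (lam e n) (Suc k)
      = mmult n (monomial n id (lam_weights e n 1)) (monomial n id (lam_weights e n k))"
    using Suc.IH unfolding mpow_def by (simp add: id_def)
  also have "\<dots> = monomial n id (lam_weights e n (Suc k))"
    by (subst monomial_mult) (auto intro: monomial_cong simp: lam_weights_def)
  finally show ?case .
qed

lemma Geen_data_lam_weights:
  assumes "e > 0" "n \<ge> 1"
  shows "Geen_data e n id (lam_weights e n k)"
proof -
  have "(zeta e ^ j) ^ e = 1" for j
    using zeta_power_self[OF assms(1)] by (metis power_mult mult.commute power_one)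
  then have "\<forall>r\<in>{1..n}. lam_weights e n k r ^ e = 1"
    unfolding lam_weights_def by (auto simp: power_inverse simp flip: power_mult)
  moreover have "{1..n} = insert 1 {2..n}" using assms(2) by auto
  then have "prod (lam_weights e n k) {1..n} = 1"
    by (simp add: lam_weights_def power_inverse flip: power_mult)
       (simp add: mult.commute power_mult)
  ultimately show ?thesis unfolding Geen_data_def by simp
qed

lemma wlen_lam_power:
  assumes "n \<ge> 2" "0 < k" "k < e"
  shows "wlen e n (mpow n (lam e n) k) = 2 * card (pairs n)"
proof -
  have "inversions n id = {}" "ascents n id = pairs n"
    by (auto simp: inversions_def ascents_def pairs_def)
  moreover have "lam_weights e n k q \<noteq> 1" if "(p, q) \<in> pairs n" for p q
    using that zeta_power_neq_1[OF assms(2,3)] by (auto simp: lam_weights_def pairs_def)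
  ultimately have "monomial_length n id (lam_weights e n k) = 2 * card (pairs n)"
    unfolding monomial_length_def by (auto intro!: arg_cong[where f = card])
  then show ?thesis
    using mpow_lam_eq_monomial wlen_monomial[OF Geen_data_lam_weights] assms by simp
qed

lemma wlen_ginv_mult_lam_power:
  assumes V: "Geen_data e n s a" and "n \<ge> 2" "0 < k" "k < e"
  shows "wlen e n (mmult n (ginv e n (monomial n s a)) (mpow n (lam e n) k))
       = card (inversions n s) + 2 * card {(p, q) \<in> ascents n s. a q \<noteq> zeta e ^ k}"
proof -
  let ?si = "inv_into {1..n} s" and ?ai = "\<lambda>r. inverse (a (inv_into {1..n} s r))"
  let ?c = "\<lambda>r. ?ai r * lam_weights e n k (?si r)"
  have b: "bij_betw s {1..n} {1..n}" using V unfolding Geen_data_def by blast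
  have "mmult n (ginv e n (monomial n s a)) (mpow n (lam e n) k) = monomial n ?si ?c"
    using ginv_monomial[OF V] mpow_lam_eq_monomial monomial_mult bij_betw_inv_into[OF b] assms
    by (simp add: bij_betw_def)
  moreover have "Geen_data e n ?si ?c"
    using Geen_data_mult[OF Geen_data_inv[OF V] Geen_data_lam_weights] assms by simp
  moreover have "?c (s q) \<noteq> 1 \<longleftrightarrow> a q \<noteq> zeta e ^ k" if "(p, q) \<in> ascents n s" for p q
  proof -
    have q: "q \<in> {1..n}" "q \<noteq> 1" using that by (auto simp: ascents_def pairs_def)
    then have c: "?c (s q) = inverse (a q) * zeta e ^ k"
      using bij_betw_inv_into_left[OF b] by (simp add: lam_weights_def)
    show ?thesis unfolding c using Geen_data_nonzero[OF V _ q(1)] assms by (auto simp: field_simps)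
  qed
  then have "{(p, q) \<in> ascents n s. ?c (s q) \<noteq> 1} = {(p, q) \<in> ascents n s. a q \<noteq> zeta e ^ k}"
    by blast
  ultimately show ?thesis
    using wlen_inv_into_monomial[OF _ b] assms by simp
qed

lemma wlen_lam_power_mult_ginv:
  assumes V: "Geen_data e n s a" and "n \<ge> 2" "0 < k" "k < e"
  shows "wlen e n (mmult n (mpow n (lam e n) k) (ginv e n (monomial n s a)))
       = card (inversions n s) + 2 * card {(p, q) \<in> ascents n s. a q \<noteq> zeta e ^ k}"
proof -
  let ?si = "inv_into {1..n} s" and ?ai = "\<lambda>r. inverse (a (inv_into {1..n} s r))"
  let ?c = "\<lambda>r. lam_weights e n k r * ?ai r"
  have b: "bij_betw s {1..n} {1..n}" using V unfolding Geen_data_def by blast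
  have "mmult n (mpow n (lam e n) k) (ginv e n (monomial n s a)) = monomial n ?si ?c"
    using ginv_monomial[OF V] mpow_lam_eq_monomial monomial_mult[of id n] assms by simp
  moreover have "Geen_data e n ?si ?c"
    using Geen_data_mult[OF Geen_data_lam_weights Geen_data_inv[OF V]] assms by simp
  moreover have "?c (s q) \<noteq> 1 \<longleftrightarrow> a q \<noteq> zeta e ^ k" if "(p, q) \<in> ascents n s" for p q
  proof -
    have q: "q \<in> {1..n}" and "s p \<in> {1..n}" "s p < s q"
      using that Geen_data_maps_to[OF V] by (auto simp: ascents_def pairs_def)
    then have c: "?c (s q) = zeta e ^ k * inverse (a q)"
      using bij_betw_inv_into_left[OF b] by (simp add: lam_weights_def)
    show ?thesis unfolding c using Geen_data_nonzero[OF V _ q] assms by (auto simp: field_simps)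
  qed
  then have "{(p, q) \<in> ascents n s. ?c (s q) \<noteq> 1} = {(p, q) \<in> ascents n s. a q \<noteq> zeta e ^ k}"
    by blast
  ultimately show ?thesis
    using wlen_inv_into_monomial[OF _ b] assms by simp
qed

lemma lpref_rpref_lam_power_iff:
  assumes V: "Geen_data e n s a" and "n \<ge> 2" "0 < k" "k < e"
  shows "lpref e n (monomial n s a) (mpow n (lam e n) k) \<longleftrightarrow> (\<forall>(p, q)\<in>ascents n s. a q = 1 \<or> a q = zeta e ^ k)"
    and "rpref e n (monomial n s a) (mpow n (lam e n) k) \<longleftrightarrow> (\<forall>(p, q)\<in>ascents n s. a q = 1 \<or> a q = zeta e ^ k)"
proof -
  have "e > 0" using assms by simp
  note lengths = wlen_ginv_mult_lam_power[OF assms] wlen_lam_power_mult_ginv[OF assms]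
    wlen_lam_power[OF assms(2-4)] wlen_monomial[OF V assms(2) \<open>e > 0\<close>] monomial_length_def
  note sum_iff = length_sum_eq_iff[OF Geen_data_inj_on[OF V] zeta_power_neq_1[OF assms(3,4)], of a]
  show "lpref e n (monomial n s a) (mpow n (lam e n) k) \<longleftrightarrow> (\<forall>(p, q)\<in>ascents n s. a q = 1 \<or> a q = zeta e ^ k)"
    unfolding lpref_def lengths using sum_iff .
  show "rpref e n (monomial n s a) (mpow n (lam e n) k) \<longleftrightarrow> (\<forall>(p, q)\<in>ascents n s. a q = 1 \<or> a q = zeta e ^ k)"
    unfolding rpref_def lengths using sum_iff by (simp only: add.commute)
qed

lemma monomial_in_Dk_iff:
  assumes V: "Geen_data e n s a" and e: "e > 0"
  shows "monomial n s a \<in> Dk e n k \<longleftrightarrow> (\<forall>(p, q)\<in>ascents n s. a q = 1 \<or> a q = zeta e ^ k)"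
proof -
  have nonzero_iff: "monomial n s a i c \<noteq> 0 \<longleftrightarrow> i \<in> {1..n} \<and> c = s i" for i c
    using Geen_data_nonzero[OF V e] unfolding monomial_def by auto
  have bullet: "\<not> is_bullet (monomial n s a) q (s q) \<longleftrightarrow> (\<exists>p. (p, q) \<in> ascents n s)"
    if "q \<in> {1..n}" for q
    using that Geen_data_nonzero[OF V e]
    unfolding is_bullet_def nonzero_iff by (auto simp: ascents_def pairs_def)
  have "monomial n s a \<in> Dk e n k \<longleftrightarrow>
      (\<forall>q\<in>{1..n}. \<not> is_bullet (monomial n s a) q (s q) \<longrightarrow> a q = 1 \<or> a q = zeta e ^ k)"
    using monomial_in_Geen[OF V e] Geen_data_nonzero[OF V e]
    unfolding Dk_def nonzero_iff by (auto simp: monomial_def)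
  also have "\<dots> \<longleftrightarrow> (\<forall>(p, q)\<in>ascents n s. a q = 1 \<or> a q = zeta e ^ k)"
  proof (intro iffI ballI impI)
    fix x assume H: "\<forall>q\<in>{1..n}. \<not> is_bullet (monomial n s a) q (s q) \<longrightarrow> a q = 1 \<or> a q = zeta e ^ k"
      and x: "x \<in> ascents n s"
    obtain p q where "x = (p, q)" by fastforce
    moreover have "q \<in> {1..n}" using x calculation by (auto simp: ascents_def pairs_def)
    ultimately show "case x of (p, q) \<Rightarrow> a q = 1 \<or> a q = zeta e ^ k"
      using H bullet x by auto
  next
    fix q assume H: "\<forall>(p, q)\<in>ascents n s. a q = 1 \<or> a q = zeta e ^ k"
      and "q \<in> {1..n}" "\<not> is_bullet (monomial n s a) q (s q)"
    then show "a q = 1 \<or> a q = zeta e ^ k" using bullet by blast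
  qed
  finally show ?thesis .
qed

theorem mainTheorem5:
  fixes e n k :: nat
  assumes "e \<ge> 2" and "n \<ge> 2" and "1 \<le> k" and "k \<le> e - 1"
  shows "interval e n (mpow n (lam e n) k) = Dk e n k \<and>
         balanced e n (mpow n (lam e n) k)"
proof -
  let ?L = "mpow n (lam e n) k"
  have k: "0 < k" "k < e" using assms by auto
  have "(lpref e n w ?L \<longleftrightarrow> w \<in> Dk e n k) \<and> (rpref e n w ?L \<longleftrightarrow> w \<in> Dk e n k)"
    if w: "w \<in> Geen e n" for w
  proof -
    obtain s a where "Geen_data e n s a" "w = monomial n s a"
      using Geen_monomialE[OF w] .
    then show ?thesis
      using lpref_rpref_lam_power_iff[OF _ assms(2) k] monomial_in_Dk_iff k by simp
  qed
  moreover have "Dk e n k \<subseteq> Geen e n" unfolding Dk_def by blast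
  ultimately have "interval e n ?L = Dk e n k" "interval_r e n ?L = Dk e n k"
    unfolding interval_def interval_r_def by blast+
  then show ?thesis unfolding balanced_def by simp
qed

end
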